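(* Let $m\ge1$ and let $1\le K\le N$ be integers with $K/N\ge\frac12+\frac1N$. Consider any received word (over a binary erasure channel, each of the $N$ symbols consisting of $m$ bits) in which more than $2(N-K+1)$ symbols contain at least one erased bit. Then under the proportional multiplicity assignment with any $M>0$, the ASD sufficient condition $S\ge\sqrt{2(K-1)C}$ is not satisfied.
   Context: Setting: a Reed–Solomon code of length $N$ and dimension $K$ over $GF(2^m)$ whose symbols are sent as $m$ bits each over a binary erasure channel. If the $j$-th received symbol has $b_j$ erased bits, it is consistent with $2^{b_j}$ candidate symbols. The proportional multiplicity assignment gives each of these candidates multiplicity $M2^{-b_j}$; the score is $S=\sum_j M2^{-b_j}$ and the (approximate) cost is $C=\frac12\sum_j 2^{b_j}(M2^{-b_j})^2$. *)

theory Defs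
  imports Complex_Main
begin

text \<open>Received word of length N: symbol j (j < N) has b j erased bits (0 \<le> b j \<le> m).
  Proportional multiplicity assignment: each of the 2^(b j) candidates of symbol j gets
  multiplicity M * 2^(-b j).\<close>

definition prop_mult :: "real \<Rightarrow> (nat \<Rightarrow> nat) \<Rightarrow> nat \<Rightarrow> real" where
  "prop_mult M b j = M / 2 ^ b j"

definition score :: "nat \<Rightarrow> real \<Rightarrow> (nat \<Rightarrow> nat) \<Rightarrow> real" where
  "score N M b = (\<Sum>j<N. prop_mult M b j)"

definition cost :: "nat \<Rightarrow> real \<Rightarrow> (nat \<Rightarrow> nat) \<Rightarrow> real" where
  "cost N M b = (1/2) * (\<Sum>j<N. 2 ^ b j * (prop_mult M b j)\<^sup>2)"

end

theory Submission
  imports Defs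
begin

text \<open>Under the proportional assignment both the score and the cost are multiples of
  T = \<Sum>j 2^(-b j): S = M T and C = M^2 T / 2. Hence S \<ge> sqrt (2 (K - 1) C) holds
  exactly when T \<ge> K - 1. Every symbol with an erased bit contributes at most 1/2 to T,
  so T \<le> N - e/2 for e such symbols, which is below K - 1 as soon as e > 2 (N - K + 1).\<close>

definition normalized_score :: "nat \<Rightarrow> (nat \<Rightarrow> nat) \<Rightarrow> real" where
  "normalized_score N b = (\<Sum>j<N. 1 / 2 ^ b j)"

lemma score_eq: "score N M b = M * normalized_score N b"
  unfolding score_def prop_mult_def normalized_score_def by (simp add: sum_distrib_left)

lemma cost_eq: "cost N M b = M\<^sup>2 / 2 * normalized_score N b"
proof -
  have "\<And>j. (2::real) ^ b j * (M / 2 ^ b j)\<^sup>2 = M\<^sup>2 * (1 / 2 ^ b j)"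
    by (simp add: power2_eq_square field_simps)
  then show ?thesis
    unfolding cost_def prop_mult_def normalized_score_def by (simp add: sum_distrib_left)
qed

lemma normalized_score_pos: "0 < N \<Longrightarrow> 0 < normalized_score N b"
  unfolding normalized_score_def by (intro sum_pos) auto

lemma sqrt_cost_le_score_iff:
  assumes "0 < M" and "0 < N"
  shows "sqrt (2 * k * cost N M b) \<le> score N M b \<longleftrightarrow> k \<le> normalized_score N b"
proof -
  define T where "T = normalized_score N b"
  have "0 < T" unfolding T_def using assms(2) by (rule normalized_score_pos)
  have "sqrt (2 * k * cost N M b) = M * sqrt (k * T)"
    using assms(1) by (simp add: cost_eq T_def real_sqrt_mult)
  then have "sqrt (2 * k * cost N M b) \<le> score N M b \<longleftrightarrow> sqrt (k * T) \<le> T"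
    using assms(1) by (simp add: score_eq T_def)
  also have "\<dots> \<longleftrightarrow> k * T \<le> T\<^sup>2"
    using \<open>0 < T\<close> real_le_lsqrt sqrt_le_D by (meson less_imp_le)
  also have "\<dots> \<longleftrightarrow> k \<le> T"
    using \<open>0 < T\<close> by (simp add: power2_eq_square)
  finally show ?thesis unfolding T_def .
qed

lemma inverse_power2_le: "1 / (2::real) ^ n \<le> 1 - of_bool (1 \<le> n) / 2"
proof (cases "1 \<le> n")
  case True
  then have "(2::real) ^ 1 \<le> 2 ^ n" by (intro power_increasing) auto
  with True show ?thesis by (simp add: field_simps)
qed simp

lemma sum_inverse_power2_le:
  assumes "finite A"
  shows "(\<Sum>j\<in>A. 1 / (2::real) ^ b j) \<le> card A - card {j\<in>A. 1 \<le> b j} / 2"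
proof -
  have "(\<Sum>j\<in>A. 1 / (2::real) ^ b j) \<le> (\<Sum>j\<in>A. 1 - of_bool (1 \<le> b j) / 2)"
    by (intro sum_mono inverse_power2_le)
  also have "\<dots> = card A - card {j\<in>A. 1 \<le> b j} / 2"
    using assms by (simp add: sum_subtractf sum_divide_distrib[symmetric] Int_def)
  finally show ?thesis .
qed

lemma normalized_score_le:
  "normalized_score N b \<le> N - card {j. j < N \<and> 1 \<le> b j} / 2"
proof -
  have "{j. j < N \<and> 1 \<le> b j} = {j\<in>{..<N}. 1 \<le> b j}" by auto
  then show ?thesis
    unfolding normalized_score_def using sum_inverse_power2_le[of "{..<N}" b] by simp
qed

theorem corollary1:
  fixes m N K :: nat and M :: real and b :: "nat \<Rightarrow> nat"
  assumes "m \<ge> 1" and "1 \<le> K" and "K \<le> N"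
    and "real K / real N \<ge> 1/2 + 1 / real N"
    and "\<forall>j<N. b j \<le> m"
    and "card {j. j < N \<and> b j \<ge> 1} > 2 * (N - K + 1)"
    and "M > 0"
  shows "\<not> (score N M b \<ge> sqrt (2 * (real K - 1) * cost N M b))"
proof
  assume "score N M b \<ge> sqrt (2 * (real K - 1) * cost N M b)"
  moreover have "0 < N" using assms(2,3) by simp
  ultimately have "real K - 1 \<le> normalized_score N b"
    using sqrt_cost_le_score_iff \<open>M > 0\<close> by blast
  moreover have "real (card {j. j < N \<and> 1 \<le> b j}) > 2 * (real N - real K + 1)"
    using assms(3,6) by (simp add: of_nat_diff)
  moreover note normalized_score_le[of N b]
  ultimately show False by (simp add: field_simps)
qed

end
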